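(* Let $X$ be a finite Abelian group containing no elements of order $2$, and let $\alpha$ be an automorphism of $X$. Set $K=\mathrm{Ker}(I+\alpha)$, where $I$ is the identity automorphism. Let $\xi_1$ and $\xi_2$ be independent random variables with values in $X$ and distributions $\mu_1$ and $\mu_2$ whose characteristic functions $\hat\mu_1,\hat\mu_2$ do not vanish anywhere on the character group $Y$ of $X$. Assume that the conditional distribution of the linear form $L_2=\xi_1+\alpha\xi_2$ given $L_1=\xi_1+\xi_2$ is symmetric. Then $\mu_j=\omega*E_{x_j}$, $j=1,2$, where $\omega$ is a distribution supported in $K$ and $x_1,x_2\in X$.
   Context: For a locally compact Abelian group $X$ with character group $Y$, the characteristic function of a probability distribution $\mu$ on $X$ is $\hat\mu(y)=\int_X (x,y)\,d\mu(x)$, $y\in Y$, where $(x,y)$ is the value of the character $y$ at $x$. $E_x$ denotes the degenerate distribution concentrated at $x\in X$, and $*$ denotes convolution. "The conditional distribution of $L_2$ given $L_1$ is symmetric" means that the random vectors $(L_1,L_2)$ and $(L_1,-L_2)$ have the same distribution. *)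

theory Defs
  imports "HOL-Probability.Probability"
begin

text \<open>A (continuous, since X is finite and discrete) character of the additive group X:
  a homomorphism into the multiplicative circle group.\<close>
definition is_character :: "('a::ab_group_add \<Rightarrow> complex) \<Rightarrow> bool" where
  "is_character ch \<longleftrightarrow> (\<forall>x y. ch (x + y) = ch x * ch y) \<and> (\<forall>x. cmod (ch x) = 1)"

definition char_fun :: "'a::{finite,ab_group_add} pmf \<Rightarrow> ('a \<Rightarrow> complex) \<Rightarrow> complex" where
  "char_fun \<mu> ch = (\<Sum>x\<in>UNIV. complex_of_real (pmf \<mu> x) * ch x)"

definition group_automorphism :: "('a::ab_group_add \<Rightarrow> 'a) \<Rightarrow> bool" where
  "group_automorphism \<alpha> \<longleftrightarrow> bij \<alpha> \<and> (\<forall>x y. \<alpha> (x + y) = \<alpha> x + \<alpha> y)"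

definition conv_pmf :: "'a::ab_group_add pmf \<Rightarrow> 'a pmf \<Rightarrow> 'a pmf" (infixl "\<star>\<^sub>c" 70) where
  "conv_pmf \<mu> \<nu> = map_pmf (\<lambda>(a, b). a + b) (pair_pmf \<mu> \<nu>)"

abbreviation degenerate :: "'a \<Rightarrow> 'a pmf" ("E") where
  "E x \<equiv> return_pmf x"

end

(*
  Symmetry of (L1, L2) under L2 \<mapsto> -L2 says that the joint characteristic function is unchanged
  when its second argument is conjugated, which is Heyde's functional equation
    f1 (u + v) f2 (u + \<beta> v) = f1 (u - v) f2 (u - \<beta> v)
  on the character group Y, where f_j is the characteristic function of \<mu>_j and \<beta> the adjoint of \<alpha>.
  The logarithms \<phi> = ln |f1| and \<psi> = ln |f2| are maximal at 0 and satisfy the additive version of it.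
  Doubling and \<beta> are bijections of the finite group Y, so summing the equation over Y for the
  substitutions v = u, u = \<beta> v and v = u - (w - \<beta> w) shows that the sum of (\<phi> + \<psi>)(0) - (\<phi> + \<psi>)
  over the range of I + \<beta> vanishes; hence |f_j| = 1 there. So every character \<gamma> \<circ> (I + \<alpha>) is
  constant on the support of \<mu>_j, and as characters separate points, I + \<alpha> is constant on each
  support: both supports are cosets of K. With \<xi>2 + \<alpha> \<xi>2 = c almost surely, L1 + L2 = 2 \<xi>1 + c and
  L1 - L2 = 2 \<xi>2 - c have the same law, and halving shows that \<mu>2 is a shift of \<mu>1.
*)

theory Submission
  imports Defs
begin

fun nsmul :: "nat \<Rightarrow> 'a::monoid_add \<Rightarrow> 'a" where
  "nsmul 0 g = 0"
| "nsmul (Suc n) g = g + nsmul n g"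

lemma nsmul_add: "nsmul (m + n) g = nsmul m g + nsmul n g"
  by (induction m) (simp_all add: add.assoc)

lemma nsmul_mult: "nsmul (m * n) g = nsmul n (nsmul m g)"
  by (induction n) (simp_all add: nsmul_add)

lemma ex_nsmul_eq_0:
  fixes x :: "'a::{finite,ab_group_add}"
  shows "\<exists>n. 0 < n \<and> n \<le> CARD('a) \<and> nsmul n x = 0"
proof -
  have "card ((\<lambda>n. nsmul n x) ` {0..CARD('a)}) \<le> CARD('a)"
    by (rule card_mono) auto
  then have "\<not> inj_on (\<lambda>n. nsmul n x) {0..CARD('a)}"
    by (intro pigeonhole) simp
  then obtain i j where ij: "i < j" "j \<le> CARD('a)" "nsmul i x = nsmul j x"
    unfolding inj_on_def by (metis atLeastAtMost_iff linorder_neqE_nat)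
  then have "nsmul (j - i) x + nsmul i x = nsmul i x"
    using nsmul_add[of "j - i" i x] by simp
  then show ?thesis
    using ij by (intro exI[of _ "j - i"]) auto
qed

lemma bij_double:
  assumes "\<forall>x::'a::{finite,ab_group_add}. x + x = 0 \<longrightarrow> x = 0"
  shows "bij (\<lambda>x::'a. x + x)"
proof -
  have "inj (\<lambda>x::'a. x + x)"
  proof (rule injI)
    fix x y :: 'a
    assume "x + x = y + y"
    then have "(x - y) + (x - y) = 0"
      by (simp add: algebra_simps)
    with assms show "x = y"
      by (metis eq_iff_diff_eq_0)
  qed
  then show ?thesis
    by (simp add: bij_def finite_UNIV_inj_surj)
qed

lemma additive_inv: "bij f \<Longrightarrow> Modules.additive f \<Longrightarrow> Modules.additive (inv f)"
  unfolding Modules.additive_def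
  by (metis bij_inv_eq_iff)

lemma bij_plus_const: "bij \<theta> \<Longrightarrow> bij (\<lambda>y. \<theta> y + (c :: 'a::group_add))"
  using bij_comp[of \<theta> "\<lambda>y. y + c"] o_bij[of "\<lambda>y. y - c" "\<lambda>y. y + c"]
  by (simp add: comp_def fun_eq_iff)

section \<open>Characters of finite abelian groups\<close>

lemma character_add: "is_character \<gamma> \<Longrightarrow> \<gamma> (x + y) = \<gamma> x * \<gamma> y"
  unfolding is_character_def by blast

lemma character_norm: "is_character \<gamma> \<Longrightarrow> cmod (\<gamma> x) = 1"
  unfolding is_character_def by blast

lemma character_mult_cnj: "is_character \<gamma> \<Longrightarrow> \<gamma> x * cnj (\<gamma> x) = 1"
  using complex_norm_square[of "\<gamma> x"] by (simp add: character_norm)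

lemma character_zero: "is_character \<gamma> \<Longrightarrow> \<gamma> 0 = 1"
  using character_add[of \<gamma> 0 0] character_mult_cnj[of \<gamma> 0]
  by (metis add_0 mult.right_neutral mult_1 mult.assoc)

lemma character_minus: "is_character \<gamma> \<Longrightarrow> \<gamma> (- x) = cnj (\<gamma> x)"
  using character_add[of \<gamma> x "- x"] character_mult_cnj[of \<gamma> x] character_zero[of \<gamma>]
  by (metis add.right_inverse mult.commute mult.left_neutral mult.assoc)

lemma character_diff: "is_character \<gamma> \<Longrightarrow> \<gamma> (x - y) = \<gamma> x * cnj (\<gamma> y)"
  using character_add[of \<gamma> x "- y"] by (simp add: character_minus)

lemma character_nsmul: "is_character \<gamma> \<Longrightarrow> \<gamma> (nsmul n x) = \<gamma> x ^ n"
  by (induction n) (simp_all add: character_zero character_add)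

lemma is_character_mult: "is_character \<gamma> \<Longrightarrow> is_character \<eta> \<Longrightarrow> is_character (\<lambda>x. \<gamma> x * \<eta> x)"
  unfolding is_character_def by (simp add: norm_mult)

lemma is_character_cnj: "is_character \<gamma> \<Longrightarrow> is_character (\<lambda>x. cnj (\<gamma> x))"
  unfolding is_character_def by simp

lemma is_character_comp: "is_character \<gamma> \<Longrightarrow> Modules.additive \<theta> \<Longrightarrow> is_character (\<lambda>x. \<gamma> (\<theta> x))"
  unfolding is_character_def by (simp add: additive.add)

lemma finite_characters: "finite {\<gamma> :: 'a::{finite,ab_group_add} \<Rightarrow> complex. is_character \<gamma>}"
proof -
  define R where "R = (\<Union>n\<in>{1..CARD('a)}. {z::complex. z ^ n = 1})"
  have "finite R"
    unfolding R_def using finite_roots_unity by auto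
  moreover have "\<gamma> x \<in> R" if "is_character \<gamma>" for \<gamma> :: "'a \<Rightarrow> complex" and x
  proof -
    obtain n where "0 < n" "n \<le> CARD('a)" "nsmul n x = 0"
      using ex_nsmul_eq_0 by blast
    moreover have "\<gamma> x ^ n = 1"
      using that \<open>nsmul n x = 0\<close> by (simp add: character_nsmul[symmetric] character_zero)
    ultimately show ?thesis
      unfolding R_def by force
  qed
  ultimately show ?thesis
    by (intro finite_subset[OF _ finite_PiE[of UNIV "\<lambda>_. R"]]) (auto simp: PiE_UNIV_domain)
qed

definition add_subgroup :: "'a::ab_group_add set \<Rightarrow> bool" where
  "add_subgroup H \<longleftrightarrow> 0 \<in> H \<and> (\<forall>a\<in>H. \<forall>b\<in>H. a + b \<in> H) \<and> (\<forall>a\<in>H. - a \<in> H)"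

definition is_character_on :: "'a::ab_group_add set \<Rightarrow> ('a \<Rightarrow> complex) \<Rightarrow> bool" where
  "is_character_on H c \<longleftrightarrow> (\<forall>a\<in>H. \<forall>b\<in>H. c (a + b) = c a * c b) \<and> (\<forall>a\<in>H. cmod (c a) = 1)"

lemma add_subgroup_diff: "add_subgroup H \<Longrightarrow> a \<in> H \<Longrightarrow> b \<in> H \<Longrightarrow> a - b \<in> H"
  unfolding add_subgroup_def by (metis diff_conv_add_uminus)

lemma add_subgroup_nsmul: "add_subgroup H \<Longrightarrow> a \<in> H \<Longrightarrow> nsmul n a \<in> H"
  by (induction n) (auto simp: add_subgroup_def)

lemma character_on_zero:
  assumes "add_subgroup H" "is_character_on H c"
  shows "c 0 = 1"
proof -
  have "c 0 = c 0 * c 0" "c 0 \<noteq> 0"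
    using assms unfolding add_subgroup_def is_character_on_def by (metis add_0, force)
  then show ?thesis
    by (metis mult_cancel_right2)
qed

lemma character_on_nsmul:
  assumes "add_subgroup H" "is_character_on H c" "a \<in> H"
  shows "c (nsmul n a) = c a ^ n"
  using assms
  by (induction n) (simp_all add: character_on_zero is_character_on_def add_subgroup_nsmul)

lemma ex_least_multiple_in_subgroup:
  fixes g :: "'a::{finite,ab_group_add}"
  assumes "add_subgroup H"
  obtains m where "0 < m" "nsmul m g \<in> H" "\<And>k. 0 < k \<Longrightarrow> k < m \<Longrightarrow> nsmul k g \<notin> H"
proof -
  have "\<exists>k. 0 < k \<and> nsmul k g \<in> H"
    using ex_nsmul_eq_0[of g] assms by (auto simp: add_subgroup_def)
  from LeastI_ex[OF this] not_less_Least[of _ "\<lambda>k. 0 < k \<and> nsmul k g \<in> H"] that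
  show ?thesis by blast
qed

definition adjoin :: "'a::monoid_add set \<Rightarrow> 'a \<Rightarrow> 'a set" where
  "adjoin H g = {a + nsmul k g | a k. a \<in> H}"

context
  fixes H :: "'a::ab_group_add set" and g :: 'a and m :: nat
  assumes subgroup: "add_subgroup H"
    and least: "0 < m" "nsmul m g \<in> H" "\<And>k. 0 < k \<Longrightarrow> k < m \<Longrightarrow> nsmul k g \<notin> H"
begin

lemma nsmul_in_subgroup_iff_dvd: "nsmul k g \<in> H \<longleftrightarrow> m dvd k"
proof
  assume "m dvd k"
  then show "nsmul k g \<in> H"
    using add_subgroup_nsmul[OF subgroup least(2)] by (auto simp: nsmul_mult)
next
  assume "nsmul k g \<in> H"
  moreover have "nsmul (m * (k div m)) g \<in> H"
    using add_subgroup_nsmul[OF subgroup least(2)] by (simp add: nsmul_mult)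
  moreover have "nsmul (k mod m) g = nsmul k g - nsmul (m * (k div m)) g"
    using nsmul_add[of "k mod m" "m * (k div m)" g] by (simp add: algebra_simps)
  ultimately have "nsmul (k mod m) g \<in> H"
    using add_subgroup_diff[OF subgroup] by metis
  then show "m dvd k"
    using least(1) least(3)[of "k mod m"] by (metis mod_less_divisor mod_0_imp_dvd neq0_conv)
qed

lemma add_subgroup_adjoin: "add_subgroup (adjoin H g)"
  unfolding add_subgroup_def
proof (intro conjI ballI)
  show "0 \<in> adjoin H g"
    using subgroup by (force simp: adjoin_def add_subgroup_def intro: exI[of _ 0])
next
  fix x y assume "x \<in> adjoin H g" "y \<in> adjoin H g"
  then obtain a k b l where "a \<in> H" "b \<in> H" "x + y = (a + b) + nsmul (k + l) g"
    by (auto simp: adjoin_def nsmul_add algebra_simps)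
  with subgroup show "x + y \<in> adjoin H g"
    unfolding add_subgroup_def adjoin_def by blast
next
  fix x assume "x \<in> adjoin H g"
  then obtain a k where a: "a \<in> H" and x: "x = a + nsmul k g"
    unfolding adjoin_def by blast
  have "nsmul (m * k) g = nsmul (m * k - k) g + nsmul k g"
    using nsmul_add[of "m * k - k" k g] least(1) by simp
  then have "- x = (- a - nsmul (m * k) g) + nsmul (m * k - k) g"
    using x by (simp add: algebra_simps)
  moreover have "- a - nsmul (m * k) g \<in> H"
    using subgroup a nsmul_in_subgroup_iff_dvd[of "m * k"]
    by (intro add_subgroup_diff) (auto simp: add_subgroup_def)
  ultimately show "- x \<in> adjoin H g"
    unfolding adjoin_def by blast
qed

lemma character_extension_step:
  assumes c: "is_character_on H c" and z: "cmod z = 1" "z ^ m = c (nsmul m g)"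
  obtains c' where "is_character_on (adjoin H g) c'" "\<forall>a\<in>H. c' a = c a" "c' g = z"
proof -
  have value_ordered: "c a * z ^ k = c a' * z ^ k'"
    if "a \<in> H" "a' \<in> H" "a + nsmul k g = a' + nsmul k' g" "k' \<le> k" for a a' k k'
  proof -
    define d where "d = k - k'"
    have "a' = a + nsmul d g"
      using that(3,4) nsmul_add[of d k' g] by (simp add: d_def add.assoc)
    moreover from this have "nsmul d g \<in> H"
      using add_subgroup_diff[OF subgroup that(2,1)] by simp
    moreover from this obtain q where "d = m * q"
      using nsmul_in_subgroup_iff_dvd by blast
    ultimately have "c a' = c a * z ^ d"
      using c that(1) z(2) character_on_nsmul[OF subgroup c least(2), of q]
      by (simp add: is_character_on_def nsmul_mult power_mult)
    then show ?thesis
      using that(4) by (simp add: d_def power_add[symmetric])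
  qed
  have value_unique: "c a * z ^ k = c a' * z ^ k'"
    if "a \<in> H" "a' \<in> H" "a + nsmul k g = a' + nsmul k' g" for a a' k k'
    using value_ordered[OF that] value_ordered[OF that(2,1) that(3)[symmetric]] by (metis nat_le_linear)
  define c' where "c' x = (SOME w. \<exists>a k. a \<in> H \<and> x = a + nsmul k g \<and> w = c a * z ^ k)" for x
  have c'_eq: "c' (a + nsmul k g) = c a * z ^ k" if "a \<in> H" for a k
  proof -
    have "\<exists>w a' k'. a' \<in> H \<and> a + nsmul k g = a' + nsmul k' g \<and> w = c a' * z ^ k'"
      using that by blast
    from someI_ex[OF this] show ?thesis
      unfolding c'_def using value_unique[OF that] by metis
  qed
  have "is_character_on (adjoin H g) c'"
    unfolding is_character_on_def
  proof (intro conjI ballI)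
    fix x y assume "x \<in> adjoin H g" "y \<in> adjoin H g"
    then obtain a k b l where ab: "a \<in> H" "b \<in> H" "x = a + nsmul k g" "y = b + nsmul l g"
      unfolding adjoin_def by blast
    then have "x + y = (a + b) + nsmul (k + l) g" "a + b \<in> H"
      using subgroup by (auto simp: add_subgroup_def nsmul_add algebra_simps)
    then have "c' (x + y) = c (a + b) * z ^ (k + l)"
      by (simp add: c'_eq)
    then show "c' (x + y) = c' x * c' y"
      using ab c by (simp add: c'_eq is_character_on_def power_add mult_ac)
  next
    fix x assume "x \<in> adjoin H g"
    then show "cmod (c' x) = 1"
      using c z(1) by (auto simp: adjoin_def c'_eq is_character_on_def norm_mult norm_power)
  qed
  moreover have "c' a = c a" if "a \<in> H" for a
    using c'_eq[OF that, of 0] by simp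
  moreover have "c' g = z"
    using c'_eq[of 0 1] subgroup character_on_zero[OF subgroup c] by (simp add: add_subgroup_def)
  ultimately show ?thesis
    using that by blast
qed

end

lemma ex_unit_root:
  assumes "cmod w = 1" "0 < m"
  shows "\<exists>z. cmod z = 1 \<and> z ^ m = w"
proof -
  have "cis (Arg w / real m) ^ m = cis (Arg w)"
    using assms(2) by (simp add: Complex.DeMoivre)
  also have "\<dots> = w"
    using assms(1) Arg_correct[of w] by (fastforce simp: sgn_div_norm)
  finally show ?thesis by force
qed

lemma ex_nontrivial_root_of_unity:
  assumes "2 \<le> m"
  shows "\<exists>z. cmod z = 1 \<and> z ^ m = 1 \<and> z \<noteq> 1"
proof (intro exI conjI)
  show "cis (2 * pi / real m) ^ m = 1"
    using assms by (simp add: Complex.DeMoivre)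
  have "0 < 2 * pi / real m" "2 * pi / real m \<le> pi"
    using assms by (auto simp: field_simps)
  then have "Re (cis (2 * pi / real m)) < 1"
    using cos_monotone_0_pi[of 0 "2 * pi / real m"] by simp
  then show "cis (2 * pi / real m) \<noteq> 1"
    by (metis cis.sel(1) one_complex.sel(1) less_irrefl)
qed simp

lemma character_extension:
  fixes H :: "'a::{finite,ab_group_add} set"
  assumes "add_subgroup H" "is_character_on H c"
  shows "\<exists>\<gamma>. is_character \<gamma> \<and> (\<forall>a\<in>H. \<gamma> a = c a)"
  using assms
proof (induction "card (UNIV - H)" arbitrary: H c rule: less_induct)
  case less
  show ?case
  proof (cases "H = UNIV")
    case True
    then show ?thesis
      using less.prems by (auto simp: is_character_on_def is_character_def)
  next
    case False
    then obtain g where g: "g \<notin> H" by blast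
    obtain m where m: "0 < m" "nsmul m g \<in> H" "\<And>k. 0 < k \<Longrightarrow> k < m \<Longrightarrow> nsmul k g \<notin> H"
      using ex_least_multiple_in_subgroup[OF less.prems(1)] by blast
    have "cmod (c (nsmul m g)) = 1"
      using less.prems(2) m(2) by (simp add: is_character_on_def)
    then obtain z where z: "cmod z = 1" "z ^ m = c (nsmul m g)"
      using ex_unit_root m(1) by blast
    obtain c' where c': "is_character_on (adjoin H g) c'" "\<forall>a\<in>H. c' a = c a"
      using character_extension_step[OF less.prems(1) m less.prems(2) z] by blast
    have "H \<subseteq> adjoin H g" "g \<in> adjoin H g"
      using less.prems(1) by (force simp: adjoin_def add_subgroup_def intro: exI[of _ 0] exI[of _ 1])+
    then have "card (UNIV - adjoin H g) < card (UNIV - H)"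
      using g by (intro psubset_card_mono) auto
    with less.hyps obtain \<gamma> where "is_character \<gamma>" "\<forall>a\<in>adjoin H g. \<gamma> a = c' a"
      using add_subgroup_adjoin[OF less.prems(1) m] c'(1) by blast
    with c'(2) \<open>H \<subseteq> adjoin H g\<close> show ?thesis
      by (intro exI[of _ \<gamma>]) auto
  qed
qed

lemma characters_separate_points:
  fixes x :: "'a::{finite,ab_group_add}"
  assumes "x \<noteq> 0"
  shows "\<exists>\<gamma>. is_character \<gamma> \<and> \<gamma> x \<noteq> 1"
proof -
  have trivial: "add_subgroup {0::'a}" "is_character_on {0::'a} (\<lambda>_. 1)"
    by (simp_all add: add_subgroup_def is_character_on_def)
  obtain m where m: "0 < m" "nsmul m x \<in> {0}" "\<And>k. 0 < k \<Longrightarrow> k < m \<Longrightarrow> nsmul k x \<notin> {0}"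
    using ex_least_multiple_in_subgroup[OF trivial(1)] by blast
  have "m \<noteq> 1"
    using m(2) assms by auto
  then obtain z where z: "cmod z = 1" "z ^ m = 1" "z \<noteq> 1"
    using ex_nontrivial_root_of_unity[of m] m(1) by auto
  obtain c where c: "is_character_on (adjoin {0} x) c" "c x = z"
    using character_extension_step[OF trivial(1) m trivial(2) z(1)] z(2) by auto
  obtain \<gamma> where \<gamma>: "is_character \<gamma>" "\<forall>a\<in>adjoin {0} x. \<gamma> a = c a"
    using character_extension[OF add_subgroup_adjoin[OF trivial(1) m] c(1)] by blast
  have "x \<in> adjoin {0} x"
    by (force simp: adjoin_def intro: exI[of _ 1])
  then have "\<gamma> x = z"
    using \<gamma>(2) c(2) by blast
  then show ?thesis
    using \<gamma>(1) z(3) by blast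
qed

section \<open>The dual group\<close>

text \<open>The character group of X; its group law, pointwise multiplication, is written additively.\<close>

typedef (overloaded) 'a dual = "{\<gamma> :: 'a::ab_group_add \<Rightarrow> complex. is_character \<gamma>}"
  morphisms character Abs_dual
  by (rule exI[of _ "\<lambda>_. 1"]) (simp add: is_character_def)

setup_lifting type_definition_dual

instantiation dual :: (ab_group_add) ab_group_add
begin

lift_definition zero_dual :: "'a dual" is "\<lambda>_. 1"
  by (simp add: is_character_def)

lift_definition plus_dual :: "'a dual \<Rightarrow> 'a dual \<Rightarrow> 'a dual" is "\<lambda>\<gamma> \<eta> x. \<gamma> x * \<eta> x"
  by (rule is_character_mult)

lift_definition uminus_dual :: "'a dual \<Rightarrow> 'a dual" is "\<lambda>\<gamma> x. cnj (\<gamma> x)"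
  by (rule is_character_cnj)

lift_definition minus_dual :: "'a dual \<Rightarrow> 'a dual \<Rightarrow> 'a dual" is "\<lambda>\<gamma> \<eta> x. \<gamma> x * cnj (\<eta> x)"
  by (intro is_character_mult is_character_cnj)

instance
  by standard (transfer; auto simp: fun_eq_iff mult_ac character_mult_cnj)+

end

instance dual :: ("{finite,ab_group_add}") finite
proof
  show "finite (UNIV :: 'a dual set)"
    using finite_imageI[OF finite_characters, of Abs_dual]
    by (simp add: type_definition.univ[OF type_definition_dual])
qed

lemma is_character_character: "is_character (character y)"
  using character by blast

text \<open>The adjoint of \<alpha>; it is only meaningful for additive \<alpha>.\<close>

definition dual_map :: "('a::ab_group_add \<Rightarrow> 'a) \<Rightarrow> 'a dual \<Rightarrow> 'a dual" where
  "dual_map \<alpha> y = Abs_dual (\<lambda>x. character y (\<alpha> x))"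

lemma character_dual_map:
  "Modules.additive \<alpha> \<Longrightarrow> character (dual_map \<alpha> y) = (\<lambda>x. character y (\<alpha> x))"
  unfolding dual_map_def
  by (simp add: Abs_dual_inverse is_character_comp is_character_character)

lemma additive_dual_map: "Modules.additive \<alpha> \<Longrightarrow> Modules.additive (dual_map \<alpha>)"
  by (simp add: Modules.additive_def character_inject[symmetric] character_dual_map plus_dual.rep_eq)

lemma bij_dual_map:
  assumes "bij \<alpha>" "Modules.additive \<alpha>"
  shows "bij (dual_map \<alpha>)"
proof (rule o_bij)
  show "dual_map (inv \<alpha>) \<circ> dual_map \<alpha> = id" "dual_map \<alpha> \<circ> dual_map (inv \<alpha>) = id"
    using assms additive_inv[OF assms]
    by (simp_all add: fun_eq_iff character_inject[symmetric] character_dual_map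
        bij_is_surj bij_is_inj surj_f_inv_f)
qed

lemma dual_no_order2:
  assumes "\<forall>x::'a::{finite,ab_group_add}. x + x = 0 \<longrightarrow> x = 0"
  shows "\<forall>y::'a dual. y + y = 0 \<longrightarrow> y = 0"
proof (intro allI impI)
  fix y :: "'a dual"
  assume "y + y = 0"
  have "character y x = 1" for x
  proof -
    obtain z where "x = z + z"
      using bij_double[OF assms] by (metis bij_pointE)
    moreover have "character y z * character y z = 1"
      using arg_cong[OF \<open>y + y = 0\<close>, of "\<lambda>y. character y z"] by (simp add: plus_dual.rep_eq zero_dual.rep_eq)
    ultimately show ?thesis
      by (simp add: character_add[OF is_character_character])
  qed
  then show "y = 0"
    by (simp add: character_inject[symmetric] zero_dual.rep_eq fun_eq_iff)
qed

lemma char_fun_eq_integral: "char_fun \<mu> \<gamma> = (LINT x|\<mu>. \<gamma> x)"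
  unfolding char_fun_def by (subst integral_measure_pmf[of UNIV]) (auto simp: scaleR_conv_of_real)

lemma char_fun_map_pmf:
  "char_fun (map_pmf F p) \<gamma> = (\<Sum>y\<in>UNIV. complex_of_real (pmf p y) * \<gamma> (F y))"
  for p :: "'b::finite pmf"
  unfolding char_fun_eq_integral integral_map_pmf
  by (subst integral_measure_pmf[of UNIV]) (auto simp: scaleR_conv_of_real)

lemma char_fun_zero: "char_fun \<mu> (character 0) = 1"
  using sum_pmf_eq_1[of UNIV \<mu>] by (simp add: char_fun_def zero_dual.rep_eq flip: of_real_sum)

lemma norm_char_fun_le_1: "is_character \<gamma> \<Longrightarrow> cmod (char_fun \<mu> \<gamma>) \<le> 1"
  unfolding char_fun_def
  using norm_sum[of "\<lambda>x. complex_of_real (pmf \<mu> x) * \<gamma> x" UNIV] sum_pmf_eq_1[of UNIV \<mu>]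
  by (simp add: norm_mult character_norm)

lemma joint_char_fun:
  assumes "is_character \<gamma>" "is_character \<eta>"
  shows "char_fun (map_pmf (\<lambda>(\<xi>1, \<xi>2). (\<xi>1 + \<xi>2, \<xi>1 + \<alpha> \<xi>2)) (pair_pmf \<mu>1 \<mu>2)) (\<lambda>(s, d). \<gamma> s * \<eta> d)
       = char_fun \<mu>1 (\<lambda>x. \<gamma> x * \<eta> x) * char_fun \<mu>2 (\<lambda>x. \<gamma> x * \<eta> (\<alpha> x))"
proof -
  have pmf_pair_pmf: "pmf (pair_pmf \<mu>1 \<mu>2) y = pmf \<mu>1 (fst y) * pmf \<mu>2 (snd y)" for y
    by (cases y) (simp add: pmf_pair)
  have "char_fun (map_pmf (\<lambda>(\<xi>1, \<xi>2). (\<xi>1 + \<xi>2, \<xi>1 + \<alpha> \<xi>2)) (pair_pmf \<mu>1 \<mu>2)) (\<lambda>(s, d). \<gamma> s * \<eta> d)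
      = (\<Sum>(a, b)\<in>UNIV. complex_of_real (pmf \<mu>1 a) * complex_of_real (pmf \<mu>2 b) * (\<gamma> (a + b) * \<eta> (a + \<alpha> b)))"
    by (simp add: char_fun_map_pmf case_prod_beta pmf_pair_pmf)
  also have "\<dots> = (\<Sum>a\<in>UNIV. \<Sum>b\<in>UNIV. (complex_of_real (pmf \<mu>1 a) * (\<gamma> a * \<eta> a))
                     * (complex_of_real (pmf \<mu>2 b) * (\<gamma> b * \<eta> (\<alpha> b))))"
    unfolding UNIV_Times_UNIV[symmetric] sum.cartesian_product[symmetric]
    using assms by (simp add: character_add mult_ac)
  finally show ?thesis
    by (simp add: char_fun_def sum_product)
qed

lemma heyde_equation:
  assumes symm: "map_pmf (\<lambda>(\<xi>1, \<xi>2). (\<xi>1 + \<xi>2, \<xi>1 + \<alpha> \<xi>2)) (pair_pmf \<mu>1 \<mu>2)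
               = map_pmf (\<lambda>(\<xi>1, \<xi>2). (\<xi>1 + \<xi>2, - (\<xi>1 + \<alpha> \<xi>2))) (pair_pmf \<mu>1 \<mu>2)"
    and "is_character \<gamma>" "is_character \<eta>"
  shows "char_fun \<mu>1 (\<lambda>x. \<gamma> x * \<eta> x) * char_fun \<mu>2 (\<lambda>x. \<gamma> x * \<eta> (\<alpha> x))
       = char_fun \<mu>1 (\<lambda>x. \<gamma> x * cnj (\<eta> x)) * char_fun \<mu>2 (\<lambda>x. \<gamma> x * cnj (\<eta> (\<alpha> x)))"
proof -
  let ?L = "map_pmf (\<lambda>(\<xi>1, \<xi>2). (\<xi>1 + \<xi>2, \<xi>1 + \<alpha> \<xi>2)) (pair_pmf \<mu>1 \<mu>2)"
  have reflect: "map_pmf (\<lambda>(s, d). (s, - d)) ?L = ?L"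
    by (subst (2) symm) (simp add: map_pmf_comp case_prod_beta')
  have "char_fun ?L (\<lambda>(s, d). \<gamma> s * \<eta> d) = char_fun (map_pmf (\<lambda>(s, d). (s, - d)) ?L) (\<lambda>(s, d). \<gamma> s * \<eta> d)"
    by (simp only: reflect)
  also have "\<dots> = (\<Sum>y\<in>UNIV. complex_of_real (pmf ?L y) * (\<gamma> (fst y) * cnj (\<eta> (snd y))))"
    using assms(3) by (simp add: char_fun_map_pmf[of _ ?L] case_prod_beta character_minus)
  also have "\<dots> = char_fun ?L (\<lambda>(s, d). \<gamma> s * cnj (\<eta> d))"
    by (simp add: char_fun_def case_prod_beta)
  finally have "char_fun ?L (\<lambda>(s, d). \<gamma> s * \<eta> d) = char_fun ?L (\<lambda>(s, d). \<gamma> s * cnj (\<eta> d))" .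
  then show ?thesis
    using assms(2,3) by (simp add: joint_char_fun is_character_cnj)
qed

section \<open>Heyde's equation on a finite abelian group\<close>

context
  fixes \<phi> \<psi> :: "'b::{finite,ab_group_add} \<Rightarrow> real" and \<beta> :: "'b \<Rightarrow> 'b"
  assumes no_order2: "\<forall>y::'b. y + y = 0 \<longrightarrow> y = 0"
    and bij: "bij \<beta>" and additive: "Modules.additive \<beta>"
    and equation: "\<And>u v. \<phi> (u + v) + \<psi> (u + \<beta> v) = \<phi> (u - v) + \<psi> (u - \<beta> v)"
begin

lemma heyde_sum_diagonal:
  "(\<Sum>y\<in>UNIV. \<phi> y) + (\<Sum>y\<in>UNIV. \<psi> (y + \<beta> y)) = CARD('b) * \<phi> 0 + (\<Sum>y\<in>UNIV. \<psi> (y - \<beta> y))"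
proof -
  have "(\<Sum>y\<in>UNIV. \<phi> (y + y)) + (\<Sum>y\<in>UNIV. \<psi> (y + \<beta> y)) = (\<Sum>y\<in>UNIV. \<phi> 0 + \<psi> (y - \<beta> y))"
    using equation[of _ _] by (simp flip: sum.distrib)
  then show ?thesis
    by (simp add: sum.distrib sum.reindex_bij_betw[OF bij_double[OF no_order2]])
qed

lemma heyde_sum_graph:
  "(\<Sum>y\<in>UNIV. \<phi> (y + \<beta> y)) + (\<Sum>y\<in>UNIV. \<psi> y) = CARD('b) * \<psi> 0 + (\<Sum>y\<in>UNIV. \<phi> (y - \<beta> y))"
proof -
  have "(\<Sum>y\<in>UNIV. \<phi> (\<beta> y + y)) + (\<Sum>y\<in>UNIV. \<psi> (\<beta> y + \<beta> y))
      = (\<Sum>y\<in>UNIV. \<phi> (\<beta> y - y) + \<psi> 0)"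
    using equation[of "\<beta> _" _] by (simp flip: sum.distrib)
  moreover have "(\<Sum>y\<in>UNIV. \<psi> (\<beta> y + \<beta> y)) = (\<Sum>y\<in>UNIV. \<psi> y)"
    using sum.reindex_bij_betw[OF bij_comp[OF bij bij_double[OF no_order2]]] by (simp add: comp_def)
  moreover have "(\<Sum>y\<in>UNIV. \<phi> (\<beta> y - y)) = (\<Sum>y\<in>UNIV. \<phi> (y - \<beta> y))"
    using sum.reindex_bij_betw[OF bij_uminus, of "\<lambda>y. \<phi> (\<beta> y - y)"] by (simp add: additive.minus[OF additive])
  ultimately show ?thesis
    by (simp add: sum.distrib add.commute)
qed

lemma heyde_sum_fiber:
  "(\<Sum>y\<in>UNIV. \<phi> y) + (\<Sum>u\<in>UNIV. \<psi> (u + \<beta> u + (\<beta> (\<beta> c) + \<beta> (\<beta> c))))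
    = CARD('b) * \<phi> (c - \<beta> c) + (\<Sum>y\<in>UNIV. \<psi> (y - \<beta> y))"
proof -
  define d where "d = c - \<beta> c"
  have "(\<Sum>u\<in>UNIV. \<phi> (u + (u - d))) + (\<Sum>u\<in>UNIV. \<psi> (u + \<beta> (u - d)))
      = (\<Sum>u\<in>UNIV. \<phi> d + \<psi> (u - \<beta> (u - d)))"
    using equation[of _ "_ - d"] by (simp flip: sum.distrib)
  moreover have "(\<Sum>u\<in>UNIV. \<phi> (u + (u - d))) = (\<Sum>y\<in>UNIV. \<phi> y)"
    using sum.reindex_bij_betw[OF bij_plus_const[OF bij_double[OF no_order2], of "- d"]]
    by (simp add: algebra_simps)
  moreover have "(\<Sum>u\<in>UNIV. \<psi> (u + \<beta> (u - d))) = (\<Sum>u\<in>UNIV. \<psi> (u + \<beta> u + (\<beta> (\<beta> c) + \<beta> (\<beta> c))))"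
    using sum.reindex_bij_betw[OF bij_plus_const[OF bij_id, of "\<beta> c"], of "\<lambda>u. \<psi> (u + \<beta> (u - d))"]
    by (simp add: d_def additive.add[OF additive] additive.diff[OF additive] algebra_simps)
  moreover have "(\<Sum>u\<in>UNIV. \<psi> (u - \<beta> (u - d))) = (\<Sum>y\<in>UNIV. \<psi> (y - \<beta> y))"
    using sum.reindex_bij_betw[OF bij_plus_const[OF bij_id, of "- \<beta> c"], of "\<lambda>u. \<psi> (u - \<beta> (u - d))"]
    by (simp add: d_def additive.add[OF additive] additive.diff[OF additive] additive.minus[OF additive]
        algebra_simps)
  ultimately show ?thesis
    by (simp add: sum.distrib d_def)
qed

lemma heyde_sum_all:
  "(\<Sum>y\<in>UNIV. \<phi> y) + (\<Sum>y\<in>UNIV. \<psi> y) = (\<Sum>y\<in>UNIV. \<phi> (y - \<beta> y)) + (\<Sum>y\<in>UNIV. \<psi> (y - \<beta> y))"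
proof -
  have bij_double_\<beta>\<beta>: "bij (\<lambda>c. \<beta> (\<beta> c) + \<beta> (\<beta> c))"
    using bij_comp[OF bij_comp[OF bij bij] bij_double[OF no_order2]] by (simp add: comp_def)
  have "(\<Sum>c\<in>UNIV. \<Sum>u\<in>UNIV. \<psi> (u + \<beta> u + (\<beta> (\<beta> c) + \<beta> (\<beta> c))))
      = (\<Sum>u\<in>UNIV. \<Sum>c\<in>UNIV. \<psi> (u + \<beta> u + (\<beta> (\<beta> c) + \<beta> (\<beta> c))))"
    by (rule sum.swap)
  also have "\<dots> = (\<Sum>u::'b\<in>UNIV. \<Sum>y\<in>UNIV. \<psi> y)"
    using sum.reindex_bij_betw[OF bij_plus_const[OF bij_double_\<beta>\<beta>], of \<psi>] by (simp add: add.commute)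
  finally have "(\<Sum>c\<in>UNIV. \<Sum>u\<in>UNIV. \<psi> (u + \<beta> u + (\<beta> (\<beta> c) + \<beta> (\<beta> c))))
      = CARD('b) * (\<Sum>y\<in>UNIV. \<psi> y)"
    by simp
  moreover have "(\<Sum>c\<in>UNIV. (\<Sum>y\<in>UNIV. \<phi> y) + (\<Sum>u\<in>UNIV. \<psi> (u + \<beta> u + (\<beta> (\<beta> c) + \<beta> (\<beta> c)))))
      = (\<Sum>c\<in>UNIV. CARD('b) * \<phi> (c - \<beta> c) + (\<Sum>y\<in>UNIV. \<psi> (y - \<beta> y)))"
    using heyde_sum_fiber by simp
  ultimately have "CARD('b) * ((\<Sum>y\<in>UNIV. \<phi> y) + (\<Sum>y\<in>UNIV. \<psi> y))
      = CARD('b) * ((\<Sum>y\<in>UNIV. \<phi> (y - \<beta> y)) + (\<Sum>y\<in>UNIV. \<psi> (y - \<beta> y)))"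
    by (simp add: sum.distrib distrib_left sum_distrib_left)
  then show ?thesis
    by simp
qed

lemma heyde_equation_maximal_on_range:
  assumes "\<forall>y. \<phi> y \<le> \<phi> 0" "\<forall>y. \<psi> y \<le> \<psi> 0"
  shows "\<phi> (y + \<beta> y) = \<phi> 0 \<and> \<psi> (y + \<beta> y) = \<psi> 0"
proof -
  let ?defect = "\<lambda>y. (\<phi> 0 - \<phi> (y + \<beta> y)) + (\<psi> 0 - \<psi> (y + \<beta> y))"
  have "(\<Sum>y\<in>UNIV. ?defect y) = 0"
    using heyde_sum_diagonal heyde_sum_graph heyde_sum_all by (simp add: sum.distrib sum_subtractf)
  moreover have "\<forall>y. 0 \<le> ?defect y"
    using assms by (simp add: add_nonneg_nonneg)
  ultimately have "?defect y = 0"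
    by (simp add: sum_nonneg_eq_0_iff)
  with assms show ?thesis
    by (smt (verit))
qed

end

section \<open>Unimodularity and supports\<close>

lemma norm_char_fun_eq_1_on_plus_image:
  fixes \<alpha> :: "'a::{finite,ab_group_add} \<Rightarrow> 'a"
  assumes no_order2: "\<forall>x::'a. x + x = 0 \<longrightarrow> x = 0"
    and bij: "bij \<alpha>" and additive: "Modules.additive \<alpha>"
    and nonvanish1: "\<forall>\<gamma>. is_character \<gamma> \<longrightarrow> char_fun \<mu>1 \<gamma> \<noteq> 0"
    and nonvanish2: "\<forall>\<gamma>. is_character \<gamma> \<longrightarrow> char_fun \<mu>2 \<gamma> \<noteq> 0"
    and symm: "map_pmf (\<lambda>(\<xi>1, \<xi>2). (\<xi>1 + \<xi>2, \<xi>1 + \<alpha> \<xi>2)) (pair_pmf \<mu>1 \<mu>2)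
             = map_pmf (\<lambda>(\<xi>1, \<xi>2). (\<xi>1 + \<xi>2, - (\<xi>1 + \<alpha> \<xi>2))) (pair_pmf \<mu>1 \<mu>2)"
    and \<gamma>: "is_character \<gamma>"
  shows "cmod (char_fun \<mu>1 (\<lambda>x. \<gamma> (x + \<alpha> x))) = 1 \<and> cmod (char_fun \<mu>2 (\<lambda>x. \<gamma> (x + \<alpha> x))) = 1"
proof -
  define \<phi> where "\<phi> y = ln (cmod (char_fun \<mu>1 (character y)))" for y
  define \<psi> where "\<psi> y = ln (cmod (char_fun \<mu>2 (character y)))" for y
  have pos: "0 < cmod (char_fun \<mu>1 (character y))" "0 < cmod (char_fun \<mu>2 (character y))" for y
    using nonvanish1 nonvanish2 is_character_character by auto
  have "char_fun \<mu>1 (character (u + v)) * char_fun \<mu>2 (character (u + dual_map \<alpha> v))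
      = char_fun \<mu>1 (character (u - v)) * char_fun \<mu>2 (character (u - dual_map \<alpha> v))" for u v
    using heyde_equation[OF symm is_character_character is_character_character]
    by (simp add: plus_dual.rep_eq minus_dual.rep_eq character_dual_map[OF additive])
  then have "ln (cmod (char_fun \<mu>1 (character (u + v))) * cmod (char_fun \<mu>2 (character (u + dual_map \<alpha> v))))
      = ln (cmod (char_fun \<mu>1 (character (u - v))) * cmod (char_fun \<mu>2 (character (u - dual_map \<alpha> v))))" for u v
    by (simp flip: norm_mult)
  then have equation: "\<phi> (u + v) + \<psi> (u + dual_map \<alpha> v) = \<phi> (u - v) + \<psi> (u - dual_map \<alpha> v)" for u v
    unfolding \<phi>_def \<psi>_def by (simp only: ln_mult_pos[OF pos(1) pos(2)])
  have "\<phi> y \<le> \<phi> 0" "\<psi> y \<le> \<psi> 0" for y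
    unfolding \<phi>_def \<psi>_def using pos
    by (simp_all add: char_fun_zero norm_char_fun_le_1 is_character_character)
  then have "\<phi> (y + dual_map \<alpha> y) = 0 \<and> \<psi> (y + dual_map \<alpha> y) = 0" for y
    using heyde_equation_maximal_on_range[OF dual_no_order2[OF no_order2] bij_dual_map[OF bij additive]
        additive_dual_map[OF additive] equation]
    by (simp add: \<phi>_def \<psi>_def char_fun_zero)
  moreover have "character (Abs_dual \<gamma> + dual_map \<alpha> (Abs_dual \<gamma>)) = (\<lambda>x. \<gamma> (x + \<alpha> x))"
    using \<gamma> by (simp add: plus_dual.rep_eq character_dual_map[OF additive] Abs_dual_inverse
        character_add additive.add[OF additive])
  ultimately show ?thesis
    using pos unfolding \<phi>_def \<psi>_def by (metis ln_eq_zero_iff)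
qed

lemma char_fun_unimodular_imp_constant:
  assumes \<gamma>: "is_character \<gamma>" and unimodular: "cmod (char_fun \<mu> \<gamma>) = 1" and x: "x \<in> set_pmf \<mu>"
  shows "\<gamma> x = char_fun \<mu> \<gamma>"
proof -
  define s where "s = char_fun \<mu> \<gamma>"
  have s_cnj: "cnj s * s = 1"
    using complex_norm_square[of s] unimodular by (simp add: s_def mult.commute)
  have norm_eq_1: "cmod (cnj s * \<gamma> y) = 1" for y
    using unimodular \<gamma> by (simp add: norm_mult s_def character_norm)
  have s_sum: "s = (\<Sum>y\<in>UNIV. complex_of_real (pmf \<mu> y) * \<gamma> y)"
    by (simp add: s_def char_fun_def)
  have "cnj s * s = cnj s * (\<Sum>y\<in>UNIV. complex_of_real (pmf \<mu> y) * \<gamma> y)"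
    by (simp only: s_sum[symmetric])
  then have "cnj s * s = (\<Sum>y\<in>UNIV. complex_of_real (pmf \<mu> y) * (cnj s * \<gamma> y))"
    by (simp add: sum_distrib_left mult_ac)
  then have "(\<Sum>y\<in>UNIV. pmf \<mu> y * Re (cnj s * \<gamma> y)) = Re (cnj s * s)"
    by (simp add: Re_sum)
  also have "\<dots> = (\<Sum>y\<in>UNIV. pmf \<mu> y)"
    using s_cnj sum_pmf_eq_1[of UNIV \<mu>] by simp
  finally have "(\<Sum>y\<in>UNIV. pmf \<mu> y * (1 - Re (cnj s * \<gamma> y))) = 0"
    by (simp add: right_diff_distrib sum_subtractf)
  moreover have "0 \<le> pmf \<mu> y * (1 - Re (cnj s * \<gamma> y))" for y
    using complex_Re_le_cmod[of "cnj s * \<gamma> y"] norm_eq_1[of y] by simp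
  ultimately have "pmf \<mu> x * (1 - Re (cnj s * \<gamma> x)) = 0"
    by (simp add: sum_nonneg_eq_0_iff)
  then have "Re (cnj s * \<gamma> x) = 1"
    using x by (simp add: set_pmf_iff)
  then have "cnj s * \<gamma> x = 1"
    using norm_eq_1[of x] cmod_power2[of "cnj s * \<gamma> x"] by (simp add: complex_eq_iff)
  then show ?thesis
    using s_cnj unfolding s_def by (metis mult.assoc mult_1 mult.commute)
qed

lemma unimodular_char_fun_imp_constant_on_support:
  fixes \<theta> :: "'a::{finite,ab_group_add} \<Rightarrow> 'a"
  assumes additive: "Modules.additive \<theta>"
    and unimodular: "\<forall>\<gamma>. is_character \<gamma> \<longrightarrow> cmod (char_fun \<mu> (\<lambda>x. \<gamma> (\<theta> x))) = 1"
    and "x \<in> set_pmf \<mu>" "y \<in> set_pmf \<mu>"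
  shows "\<theta> x = \<theta> y"
proof (rule ccontr)
  assume "\<theta> x \<noteq> \<theta> y"
  then obtain \<gamma> where \<gamma>: "is_character \<gamma>" "\<gamma> (\<theta> x - \<theta> y) \<noteq> 1"
    using characters_separate_points[of "\<theta> x - \<theta> y"] by auto
  have "is_character (\<lambda>x. \<gamma> (\<theta> x))"
    using is_character_comp[OF \<gamma>(1) additive] .
  then have "\<gamma> (\<theta> x) = \<gamma> (\<theta> y)"
    using char_fun_unimodular_imp_constant unimodular \<gamma>(1) assms(3,4) by metis
  then show False
    using \<gamma> by (simp add: character_diff character_mult_cnj)
qed

lemma map_pmf_inj_cancel: "inj f \<Longrightarrow> map_pmf f p = map_pmf f q \<Longrightarrow> p = q"
  by (metis pmf_eqI pmf_map_inj')

lemma conv_pmf_degenerate: "\<mu> \<star>\<^sub>c E a = map_pmf (\<lambda>x. x + a) \<mu>"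
  unfolding conv_pmf_def by (simp add: pair_return_pmf2 map_pmf_comp)

lemma symmetric_forms_imp_shifted_laws:
  fixes \<alpha> :: "'a::{finite,ab_group_add} \<Rightarrow> 'a"
  assumes no_order2: "\<forall>x::'a. x + x = 0 \<longrightarrow> x = 0"
    and symm: "map_pmf (\<lambda>(\<xi>1, \<xi>2). (\<xi>1 + \<xi>2, \<xi>1 + \<alpha> \<xi>2)) (pair_pmf \<mu>1 \<mu>2)
             = map_pmf (\<lambda>(\<xi>1, \<xi>2). (\<xi>1 + \<xi>2, - (\<xi>1 + \<alpha> \<xi>2))) (pair_pmf \<mu>1 \<mu>2)"
    and constant_part: "\<forall>b\<in>set_pmf \<mu>2. b + \<alpha> b = c"
  shows "\<mu>2 = map_pmf (\<lambda>a. a + c) \<mu>1"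
proof -
  let ?double_shift = "\<lambda>a::'a. a + a + c"
  have "map_pmf (\<lambda>(s, d). s + d) (map_pmf (\<lambda>(\<xi>1, \<xi>2). (\<xi>1 + \<xi>2, \<xi>1 + \<alpha> \<xi>2)) (pair_pmf \<mu>1 \<mu>2))
      = map_pmf (\<lambda>p. ?double_shift (fst p)) (pair_pmf \<mu>1 \<mu>2)"
    unfolding map_pmf_comp using constant_part
    by (intro map_pmf_cong) (auto simp: algebra_simps)
  also have "\<dots> = map_pmf ?double_shift \<mu>1"
    using map_pmf_comp[of ?double_shift fst "pair_pmf \<mu>1 \<mu>2"] by (simp add: map_fst_pair_pmf)
  finally have sum_of_forms: "map_pmf (\<lambda>(s, d). s + d) (map_pmf (\<lambda>(\<xi>1, \<xi>2). (\<xi>1 + \<xi>2, \<xi>1 + \<alpha> \<xi>2)) (pair_pmf \<mu>1 \<mu>2))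
      = map_pmf ?double_shift \<mu>1" .
  have "map_pmf (\<lambda>(s, d). s + d) (map_pmf (\<lambda>(\<xi>1, \<xi>2). (\<xi>1 + \<xi>2, - (\<xi>1 + \<alpha> \<xi>2))) (pair_pmf \<mu>1 \<mu>2))
      = map_pmf (\<lambda>p. ?double_shift (snd p - c)) (pair_pmf \<mu>1 \<mu>2)"
    unfolding map_pmf_comp using constant_part
    by (intro map_pmf_cong) (auto simp: algebra_simps)
  also have "\<dots> = map_pmf ?double_shift (map_pmf (\<lambda>b. b - c) \<mu>2)"
    using map_pmf_comp[of "\<lambda>b. ?double_shift (b - c)" snd "pair_pmf \<mu>1 \<mu>2"]
    by (simp add: map_snd_pair_pmf map_pmf_comp)
  finally have "map_pmf ?double_shift \<mu>1 = map_pmf ?double_shift (map_pmf (\<lambda>b. b - c) \<mu>2)"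
    using symm sum_of_forms by simp
  moreover have "inj ?double_shift"
    using bij_plus_const[OF bij_double[OF no_order2]] by (rule bij_is_inj)
  ultimately have "\<mu>1 = map_pmf (\<lambda>b. b - c) \<mu>2"
    by (rule map_pmf_inj_cancel[rotated])
  then show ?thesis
    by (simp add: map_pmf_comp)
qed

theorem theorem2p1:
  fixes \<alpha> :: "'a::{finite,ab_group_add} \<Rightarrow> 'a"
    and \<mu>1 \<mu>2 :: "'a pmf"
  assumes no_order2: "\<forall>x::'a. x + x = 0 \<longrightarrow> x = 0"
    and aut: "group_automorphism \<alpha>"
    and nonvanish1: "\<forall>ch. is_character ch \<longrightarrow> char_fun \<mu>1 ch \<noteq> 0"
    and nonvanish2: "\<forall>ch. is_character ch \<longrightarrow> char_fun \<mu>2 ch \<noteq> 0"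
    and symm: "map_pmf (\<lambda>(\<xi>1, \<xi>2). (\<xi>1 + \<xi>2, \<xi>1 + \<alpha> \<xi>2)) (pair_pmf \<mu>1 \<mu>2)
             = map_pmf (\<lambda>(\<xi>1, \<xi>2). (\<xi>1 + \<xi>2, - (\<xi>1 + \<alpha> \<xi>2))) (pair_pmf \<mu>1 \<mu>2)"
  shows "\<exists>\<omega> x1 x2. set_pmf \<omega> \<subseteq> {x. x + \<alpha> x = 0}
            \<and> \<mu>1 = \<omega> \<star>\<^sub>c E x1 \<and> \<mu>2 = \<omega> \<star>\<^sub>c E x2"
proof -
  have bij: "bij \<alpha>" and additive: "Modules.additive \<alpha>"
    using aut by (simp_all add: group_automorphism_def Modules.additive_def)
  have additive_plus: "Modules.additive (\<lambda>x. x + \<alpha> x)"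
    using additive by (simp add: Modules.additive_def algebra_simps)
  note unimodular = norm_char_fun_eq_1_on_plus_image[OF no_order2 bij additive nonvanish1 nonvanish2 symm]
  obtain x1 where x1: "x1 \<in> set_pmf \<mu>1"
    using set_pmf_not_empty by fast
  obtain x2 where x2: "x2 \<in> set_pmf \<mu>2"
    using set_pmf_not_empty by fast
  define \<omega> where "\<omega> = map_pmf (\<lambda>x. x - x1) \<mu>1"
  have "set_pmf \<omega> \<subseteq> {x. x + \<alpha> x = 0}"
    using unimodular_char_fun_imp_constant_on_support[OF additive_plus _ _ x1] unimodular
    by (auto simp: \<omega>_def additive.diff[OF additive] algebra_simps)
  moreover have "\<mu>1 = \<omega> \<star>\<^sub>c E x1"
    by (simp add: \<omega>_def conv_pmf_degenerate map_pmf_comp)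
  moreover have "\<mu>2 = map_pmf (\<lambda>a. a + (x2 + \<alpha> x2)) \<mu>1"
    using unimodular_char_fun_imp_constant_on_support[OF additive_plus _ _ x2] unimodular
    by (intro symmetric_forms_imp_shifted_laws[OF no_order2 symm]) blast
  then have "\<mu>2 = \<omega> \<star>\<^sub>c E (x1 + (x2 + \<alpha> x2))"
    by (simp add: \<omega>_def conv_pmf_degenerate map_pmf_comp add.assoc)
  ultimately show ?thesis
    by blast
qed

end
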